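(* Let $S\subseteq Q$ be nonempty and let $c$ be a joint choice on $\mathfrak{M}_Q\subseteq\prod_{q\in Q}2^{X_q}$. If $c$ is $S$-separable and rationalizable, and $\mathfrak{M}_Q$ is $S$-rich, then the revealed joint preference $\succsim^c$ on $\prod_{q\in Q}X_q$ is $S$-separable.
   Context: Let $Q=\{1,\dots,n\}$ with $n\ge 2$ be a finite set of dimensions. For each $q\in Q$, $X_q$ is a nonempty finite set, and $2^{X_q}$ denotes the family of nonempty subsets of $X_q$. A (multidimensional) menu is a tuple $A_Q=(A_q)_{q\in Q}\in\prod_{q\in Q}2^{X_q}$; its alternatives are the elements $x_Q=(x_q)_{q\in Q}$ of $\prod_{q\in Q}A_q$, and we write $x_Q\in A_Q$ for $x_Q\in\prod_{q\in Q}A_q$. Let $\mathfrak{M}_Q\subseteq\prod_{q\in Q}2^{X_q}$ be a nonempty family of menus. A joint choice on $\mathfrak{M}_Q$ is a map $c$ assigning to each $A_Q\in\mathfrak{M}_Q$ a set $c(A_Q)$ with $\emptyset\neq c(A_Q)\subseteq\prod_{q\in Q}A_q$. For nonempty $S\subseteq Q$, write $-S=Q\setminus S$, $x_S=(x_q)_{q\in S}$, $(x_S,u_{-S})$ for the alternative with components $x_q$ ($q\in S$) and $u_q$ ($q\in -S$), and $\pi_S$ for the projection $x_Q\mapsto x_S$, extended to sets of alternatives by taking images and to menus by $\pi_S(A_Q)=A_S:=(A_q)_{q\in S}$; $\pi_S(\mathfrak{M}_Q)=\{\pi_S(A_Q):A_Q\in\mathfrak{M}_Q\}$; $(A_S,B_{-S})$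 is the menu with $q$-component $A_q$ for $q\in S$ and $B_q$ for $q\in -S$. A joint choice $c$ is $S$-separable if $\pi_S(c(A_S,B_{-S}))=\pi_S(c(A_S,C_{-S}))$ for all $A_S\in\pi_S(\mathfrak{M}_Q)$, $B_{-S},C_{-S}\in\pi_{-S}(\mathfrak{M}_Q)$ with $(A_S,B_{-S}),(A_S,C_{-S})\in\mathfrak{M}_Q$ (vacuous for $S=Q$). For a binary relation $\succsim$ on $\prod_{q\in Q}X_q$, let $\succ$ be its asymmetric part ($x\succ y$ iff $x\succsim y$ and not $y\succsim x$) and $\max(A_Q,\succsim)=\{x_Q\in A_Q:\text{there is no }y_Q\in A_Q\text{ with }y_Q\succ x_Q\}$. The revealed joint preference of $c$ is the relation $\succsim^c$ on $\prod_{q\in Q}X_q$ given by $x_Q\succsim^c y_Q$ iff there is $B_Q\in\mathfrak{M}_Q$ with $x_Q\in c(B_Q)$ and $y_Q\in B_Q$. The joint choice $c$ is rationalizable if $c(A_Q)=\max(A_Q,\succsim^c)$ for every $A_Q\in\mathfrak{M}_Q$. A binary relation $\succsim$ on $\prod_{q\in Q}X_q$ is $S$-separable if for all $x_S,y_S\in\prod_{q\in S}X_q$: if $(x_S,u_{-S})\succsim(y_S,u_{-S})$ for some $u_{-S}\in\prod_{q\in -S}X_q$, then $(x_S,v_{-S})\succsim(y_S,v_{-S})$ for all $v_{-S}\in\prod_{q\in -S}X_q$. The family $\mathfrak{M}_Q$ is $S$-rich if whenever some $A_Q\in\mathfrak{M}_Q$ contains both $(x_S,u_{-S})$ and $(y_S,u_{-S})$,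 then for every $v_{-S}\in\prod_{q\in -S}X_q$ the menu whose $q$-component is $\{x_q,y_q\}$ for $q\in S$ and $\{v_q\}$ for $q\in -S$ belongs to $\mathfrak{M}_Q$. *)

theory Defs
  imports "HOL-Library.FuncSet"
begin

text \<open>Dimensions Q (a finite set of naturals), component sets X q.
  Alternatives are extensional functions in PiE Q X; menus are extensional
  functions A with A q a nonempty subset of X q.\<close>

definition merge :: "nat set \<Rightarrow> (nat \<Rightarrow> 'b) \<Rightarrow> (nat \<Rightarrow> 'b) \<Rightarrow> nat \<Rightarrow> 'b" where
  "merge S a b = (\<lambda>q. if q \<in> S then a q else b q)"

definition menus :: "nat set \<Rightarrow> (nat \<Rightarrow> 'a set) \<Rightarrow> (nat \<Rightarrow> 'a set) set" where
  "menus Q X = PiE Q (\<lambda>q. {B. B \<noteq> {} \<and> B \<subseteq> X q})"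

definition joint_choice ::
  "nat set \<Rightarrow> (nat \<Rightarrow> 'a set) \<Rightarrow> (nat \<Rightarrow> 'a set) set \<Rightarrow> ((nat \<Rightarrow> 'a set) \<Rightarrow> (nat \<Rightarrow> 'a) set) \<Rightarrow> bool" where
  "joint_choice Q X M c \<longleftrightarrow> M \<noteq> {} \<and> M \<subseteq> menus Q X \<and>
     (\<forall>A\<in>M. c A \<noteq> {} \<and> c A \<subseteq> PiE Q A)"

definition proj :: "nat set \<Rightarrow> (nat \<Rightarrow> 'b) \<Rightarrow> nat \<Rightarrow> 'b" where
  "proj S x = restrict x S"

definition choice_separable ::
  "nat set \<Rightarrow> nat set \<Rightarrow> (nat \<Rightarrow> 'a set) set \<Rightarrow> ((nat \<Rightarrow> 'a set) \<Rightarrow> (nat \<Rightarrow> 'a) set) \<Rightarrow> bool" where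
  "choice_separable Q S M c \<longleftrightarrow>
     (\<forall>A\<in>proj S ` M. \<forall>B\<in>proj (Q - S) ` M. \<forall>C\<in>proj (Q - S) ` M.
        merge S A B \<in> M \<longrightarrow> merge S A C \<in> M \<longrightarrow>
        proj S ` c (merge S A B) = proj S ` c (merge S A C))"

definition revealed :: "nat set \<Rightarrow> (nat \<Rightarrow> 'a set) set \<Rightarrow> ((nat \<Rightarrow> 'a set) \<Rightarrow> (nat \<Rightarrow> 'a) set)
    \<Rightarrow> (nat \<Rightarrow> 'a) \<Rightarrow> (nat \<Rightarrow> 'a) \<Rightarrow> bool" where
  "revealed Q M c x y \<longleftrightarrow> (\<exists>B\<in>M. x \<in> c B \<and> y \<in> PiE Q B)"

definition strict_part :: "('b \<Rightarrow> 'b \<Rightarrow> bool) \<Rightarrow> 'b \<Rightarrow> 'b \<Rightarrow> bool" where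
  "strict_part R x y \<longleftrightarrow> R x y \<and> \<not> R y x"

definition maxset :: "nat set \<Rightarrow> (nat \<Rightarrow> 'a set) \<Rightarrow> ((nat \<Rightarrow> 'a) \<Rightarrow> (nat \<Rightarrow> 'a) \<Rightarrow> bool) \<Rightarrow> (nat \<Rightarrow> 'a) set" where
  "maxset Q A R = {x \<in> PiE Q A. \<not> (\<exists>y\<in>PiE Q A. strict_part R y x)}"

definition rationalizable ::
  "nat set \<Rightarrow> (nat \<Rightarrow> 'a set) set \<Rightarrow> ((nat \<Rightarrow> 'a set) \<Rightarrow> (nat \<Rightarrow> 'a) set) \<Rightarrow> bool" where
  "rationalizable Q M c \<longleftrightarrow> (\<forall>A\<in>M. c A = maxset Q A (revealed Q M c))"

definition rel_separable ::
  "nat set \<Rightarrow> nat set \<Rightarrow> (nat \<Rightarrow> 'a set) \<Rightarrow> ((nat \<Rightarrow> 'a) \<Rightarrow> (nat \<Rightarrow> 'a) \<Rightarrow> bool) \<Rightarrow> bool" where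
  "rel_separable Q S X R \<longleftrightarrow>
     (\<forall>x\<in>PiE S X. \<forall>y\<in>PiE S X.
        (\<exists>u\<in>PiE (Q - S) X. R (merge S x u) (merge S y u)) \<longrightarrow>
        (\<forall>v\<in>PiE (Q - S) X. R (merge S x v) (merge S y v)))"

definition rich ::
  "nat set \<Rightarrow> nat set \<Rightarrow> (nat \<Rightarrow> 'a set) \<Rightarrow> (nat \<Rightarrow> 'a set) set \<Rightarrow> bool" where
  "rich Q S X M \<longleftrightarrow>
     (\<forall>A\<in>M. \<forall>x\<in>PiE S X. \<forall>y\<in>PiE S X. \<forall>u\<in>PiE (Q - S) X.
        merge S x u \<in> PiE Q A \<longrightarrow> merge S y u \<in> PiE Q A \<longrightarrow>
        (\<forall>v\<in>PiE (Q - S) X.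
           (\<lambda>q. if q \<in> S then {x q, y q} else if q \<in> Q then {v q} else undefined) \<in> M))"

end

theory Submission
  imports Defs
begin

text \<open>Suppose (x_S, u) is revealed preferred to (y_S, u), witnessed by a menu B. By richness the
  binary menu D_u with components {x_q, y_q} on S and {u_q} off S is observed, and it lies
  inside B, so rationalizability forces (x_S, u) to be chosen from D_u. The menus D_u and D_v
  agree on S, hence by S-separability some alternative chosen from D_v has S-part x_S; being
  in D_v, it is (x_S, v), and it reveals (x_S, v) preferred to (y_S, v).\<close>

definition pair_menu ::
  "nat set \<Rightarrow> nat set \<Rightarrow> (nat \<Rightarrow> 'a) \<Rightarrow> (nat \<Rightarrow> 'a) \<Rightarrow> (nat \<Rightarrow> 'a) \<Rightarrow> nat \<Rightarrow> 'a set" where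
  "pair_menu Q S x y v = (\<lambda>q. if q \<in> S then {x q, y q} else if q \<in> Q then {v q} else undefined)"

lemma proj_pair_menu: "proj S (pair_menu Q S x y u) = proj S (pair_menu Q S x y v)"
  by (simp add: proj_def pair_menu_def cong: restrict_cong)

lemma merge_in_pair_menu:
  assumes "S \<subseteq> Q" and "v \<in> extensional (Q - S)"
  shows "merge S x v \<in> PiE Q (pair_menu Q S x y v)" and "merge S y v \<in> PiE Q (pair_menu Q S x y v)"
  using assms unfolding merge_def pair_menu_def PiE_def extensional_def by auto

lemma PiE_pair_menu_subset:
  assumes "merge S x u \<in> PiE Q B" and "merge S y u \<in> PiE Q B"
  shows "PiE Q (pair_menu Q S x y u) \<subseteq> PiE Q B"
proof
  fix z assume z: "z \<in> PiE Q (pair_menu Q S x y u)"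
  have "z q \<in> B q" if "q \<in> Q" for q
    using PiE_mem[OF z that] PiE_mem[OF assms(1) that] PiE_mem[OF assms(2) that] that
    by (auto simp: pair_menu_def merge_def split: if_splits)
  with z show "z \<in> PiE Q B" by (auto simp: PiE_def Pi_def)
qed

lemma PiE_pair_menu_proj_eq:
  assumes "w \<in> PiE Q (pair_menu Q S x y v)" and "proj S w = proj S x"
    and "v \<in> extensional (Q - S)"
  shows "w = merge S x v"
proof
  fix q
  show "w q = merge S x v q"
  proof (cases "q \<in> Q - S")
    case True
    then show ?thesis using PiE_mem[OF assms(1), of q] by (simp add: pair_menu_def merge_def)
  next
    case False
    then show ?thesis
      using fun_cong[OF assms(2), of q] assms(1,3)
      by (auto simp: proj_def merge_def PiE_def extensional_def)
  qed
qed

lemma menu_eq_merge_proj: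
  assumes "A \<in> menus Q X" and "S \<subseteq> Q"
  shows "merge S (proj S A) (proj (Q - S) A) = A"
proof
  fix q
  show "merge S (proj S A) (proj (Q - S) A) q = A q"
    using assms by (auto simp: merge_def proj_def menus_def PiE_def extensional_def)
qed

lemma choice_separable_proj_eq:
  assumes "joint_choice Q X M c" and "choice_separable Q S M c" and "S \<subseteq> Q"
    and "A \<in> M" and "A' \<in> M" and "proj S A = proj S A'"
  shows "proj S ` c A = proj S ` c A'"
proof -
  have merge_A: "merge S (proj S A) (proj (Q - S) A) = A"
    and merge_A': "merge S (proj S A) (proj (Q - S) A') = A'"
    using assms menu_eq_merge_proj[of _ Q X S] unfolding joint_choice_def by (metis subsetD)+
  show ?thesis
    using assms(2,4,5) merge_A merge_A' unfolding choice_separable_def by (metis imageI)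
qed

lemma rationalizable_chosen_in_submenu:
  assumes "rationalizable Q M c" and "B \<in> M" and "x \<in> c B"
    and "A \<in> M" and "x \<in> PiE Q A" and "PiE Q A \<subseteq> PiE Q B"
  shows "x \<in> c A"
proof -
  have "\<not> strict_part (revealed Q M c) z x" if "z \<in> PiE Q A" for z
    using assms(2,3,6) that unfolding strict_part_def revealed_def by blast
  then show ?thesis
    using assms(1,4,5) unfolding rationalizable_def maxset_def by blast
qed

theorem mainTheorem9:
  fixes n :: nat and Q S :: "nat set" and X :: "nat \<Rightarrow> 'a set"
    and M :: "(nat \<Rightarrow> 'a set) set" and c :: "(nat \<Rightarrow> 'a set) \<Rightarrow> (nat \<Rightarrow> 'a) set"
  assumes "n \<ge> 2" and "Q = {1..n}"
    and "\<forall>q\<in>Q. finite (X q) \<and> X q \<noteq> {}"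
    and "S \<subseteq> Q" and "S \<noteq> {}"
    and "joint_choice Q X M c"
    and "choice_separable Q S M c"
    and "rationalizable Q M c"
    and "rich Q S X M"
  shows "rel_separable Q S X (revealed Q M c)"
  unfolding rel_separable_def
proof (intro ballI impI)
  fix x y v
  assume x: "x \<in> PiE S X" and y: "y \<in> PiE S X" and v: "v \<in> PiE (Q - S) X"
    and "\<exists>u\<in>PiE (Q - S) X. revealed Q M c (merge S x u) (merge S y u)"
  then obtain u B where u: "u \<in> PiE (Q - S) X" and "B \<in> M"
    and xu_chosen: "merge S x u \<in> c B" and yu: "merge S y u \<in> PiE Q B"
    unfolding revealed_def by blast
  have u_ext: "u \<in> extensional (Q - S)" and v_ext: "v \<in> extensional (Q - S)"
    using u v by (simp_all add: PiE_iff)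
  have xu: "merge S x u \<in> PiE Q B"
    using assms(6) \<open>B \<in> M\<close> xu_chosen unfolding joint_choice_def by blast
  have pair_menu_in: "pair_menu Q S x y w \<in> M" if "w \<in> PiE (Q - S) X" for w
    using assms(9) \<open>B \<in> M\<close> x y u xu yu that unfolding rich_def pair_menu_def by blast
  have "merge S x u \<in> c (pair_menu Q S x y u)"
    using rationalizable_chosen_in_submenu[OF assms(8) \<open>B \<in> M\<close> xu_chosen pair_menu_in[OF u]
      merge_in_pair_menu(1)[OF assms(4) u_ext] PiE_pair_menu_subset[OF xu yu]] .
  moreover have "proj S ` c (pair_menu Q S x y u) = proj S ` c (pair_menu Q S x y v)"
    by (rule choice_separable_proj_eq[OF assms(6,7,4) pair_menu_in[OF u] pair_menu_in[OF v]
          proj_pair_menu])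
  moreover have "proj S (merge S x u) = proj S x"
    by (simp add: proj_def merge_def cong: restrict_cong)
  ultimately obtain w where w: "w \<in> c (pair_menu Q S x y v)" and "proj S w = proj S x"
    by (metis imageE imageI)
  moreover have "w \<in> PiE Q (pair_menu Q S x y v)"
    using assms(6) pair_menu_in[OF v] w unfolding joint_choice_def by blast
  ultimately have "w = merge S x v"
    using PiE_pair_menu_proj_eq v_ext by blast
  then show "revealed Q M c (merge S x v) (merge S y v)"
    unfolding revealed_def
    using pair_menu_in[OF v] w merge_in_pair_menu(2)[OF assms(4) v_ext] by blast
qed

end
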